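(* Let $P$ be a prior distribution over $\mathcal F$, let $c>0$, $h\in(0,1]$, and $c_2$ with $0<c_2<h^2c$. Let $\kappa>0$, $\delta\in(0,1)$, $m\ge1$ and $\lambda>0$ with $$\frac{\lambda}{m}\le\min\Big(\frac{h^2c-c_2}{2(1+h^2c)(1+c_2)},\;\frac{4c_2h^2}{(1+c_2)(1+c_2h^2)}\Big(\kappa+\log\frac4\delta\Big)\Big).$$ Then with probability at least $1-\delta$ over $S=(z_1,\dots,z_m)\sim\mathcal D^m$, $$\sup_{Q:\ \mathrm{KL}(Q\|P)\le\kappa}\Big[\mathcal L_{\mathcal D}(Q)-\hat{\mathcal L}_S(Q)-\frac{c}{m}\sum_{i=1}^m\mathbb E_{f\sim Q}\big[f(z_i)-(1+h)\ell_Q(z_i)\big]^2\Big]\le\frac{4}{\lambda}\Big(\kappa+\log\frac4\delta\Big).$$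
   Context: Let $(\mathcal Z,\Sigma)$ be a measurable space and $\mathcal D$ a probability distribution on $\mathcal Z$. Let $\mathcal F$ be a class of measurable functions $f:\mathcal Z\to\{0,1\}$, equipped with a $\sigma$-algebra for which $(f,z)\mapsto f(z)$ is jointly measurable; "distributions over $\mathcal F$" are probability measures on it. $S=(z_1,\dots,z_m)\sim\mathcal D^m$ is an i.i.d. sample. For a distribution $Q$ over $\mathcal F$: $\ell_Q(z)=\mathbb E_{f\sim Q}f(z)$, $\mathcal L_{\mathcal D}(Q)=\mathbb E_{f\sim Q}\mathbb E_{z\sim\mathcal D}f(z)$, $\hat{\mathcal L}_S(Q)=\frac1m\sum_{i=1}^m\ell_Q(z_i)$. $\mathrm{KL}(Q\|P)$ is the relative entropy ($+\infty$ unless $Q\ll P$). The prior $P$ does not depend on $S$. The supremum is assumed measurable (or the probability is understood as outer probability). *)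

theory Defs
  imports "HOL-Probability.Probability"
begin

text \<open>KL(Q||P) \<le> k, with the convention KL = +infinity unless Q \<ll> P.
  KL(Q||P) = E_Q[ln(dQ/dP)]; since the negative part of ln(dQ/dP) is always
  Q-integrable, KL is finite iff ln(dQ/dP) is Q-integrable.\<close>
definition kl_le :: "'a measure \<Rightarrow> 'a measure \<Rightarrow> real \<Rightarrow> bool" where
  "kl_le Q P k \<longleftrightarrow> absolutely_continuous P Q \<and>
     integrable Q (entropy_density (exp 1) P Q) \<and> KL_divergence (exp 1) P Q \<le> k"

end

theory Submission
  imports Defs
begin

text \<open>Put \<open>a = 1 + h\<^sup>2 c\<close> and \<open>t = \<lambda> / m\<close>. For a \<open>{0,1}\<close>-valued \<open>f\<close> the exponential moment
  \<open>E\<^sub>S exp (t (m L\<^sub>D(f) - a \<Sum>\<^sub>i f(z\<^sub>i)))\<close> is at most 1 as soon as \<open>(1 + h\<^sup>2 c) t \<le> h\<^sup>2 c\<close>.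
  By Fubini and Markov's inequality, with probability \<open>\<ge> 1 - \<delta>\<close> its average under the prior is
  \<open>\<le> 1/\<delta>\<close>, and the Donsker--Varadhan change of measure turns this into
  \<open>L\<^sub>D(Q) - (a/m) \<Sum>\<^sub>i \<ell>\<^sub>Q(z\<^sub>i) \<le> (\<kappa> + ln (1/\<delta>)) / \<lambda>\<close> for every posterior with \<open>KL(Q\<parallel>P) \<le> \<kappa>\<close>.
  For binary \<open>f\<close> the variance term satisfies
  \<open>E\<^sub>Q (f(z) - (1+h) \<ell>\<^sub>Q(z))\<^sup>2 = h\<^sup>2 \<ell>\<^sub>Q(z) + (1 - h\<^sup>2) \<ell>\<^sub>Q(z) (1 - \<ell>\<^sub>Q(z)) \<ge> h\<^sup>2 \<ell>\<^sub>Q(z)\<close>,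
  so the penalty with weight \<open>c\<close> pays for the inflation \<open>a - 1 = h\<^sup>2 c\<close>.\<close>

lemma nn_integral_exp_div_RN_deriv_le:
  fixes P Q :: "'a measure" and g :: "'a \<Rightarrow> real"
  assumes P: "prob_space P" and Q: "prob_space Q" and sQ: "sets Q = sets P"
    and ac: "absolutely_continuous P Q" and g[measurable]: "g \<in> borel_measurable P"
  shows "(\<integral>\<^sup>+x. ennreal (exp (g x) / enn2real (RN_deriv P Q x)) \<partial>Q) \<le> (\<integral>\<^sup>+x. exp (g x) \<partial>P)"
proof -
  interpret P: prob_space P by fact
  interpret Q: prob_space Q by fact
  let ?r = "RN_deriv P Q"
  have Q_density: "density P ?r = Q" using P.density_RN_deriv[OF ac sQ] .
  have fin: "AE x in P. ?r x \<noteq> \<infinity>"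
    using P.RN_deriv_finite[OF _ ac sQ] Q.sigma_finite_measure_axioms by blast
  have "(\<integral>\<^sup>+x. ennreal (exp (g x) / enn2real (?r x)) \<partial>Q)
      = (\<integral>\<^sup>+x. ?r x * ennreal (exp (g x) / enn2real (?r x)) \<partial>P)"
    by (subst Q_density[symmetric], subst nn_integral_density) auto
  also have "\<dots> \<le> (\<integral>\<^sup>+x. exp (g x) \<partial>P)"
    using fin
  proof (intro nn_integral_mono_AE, eventually_elim)
    case (elim x)
    define y where "y = enn2real (?r x)"
    have r_eq: "?r x = ennreal y" using elim by (simp add: y_def ennreal_enn2real_if)
    show ?case
    proof (cases "y = 0")
      case False
      then have "y > 0" by (simp add: y_def order_less_le)
      then show ?thesis
        by (simp add: r_eq flip: y_def ennreal_mult)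
    qed (simp add: r_eq flip: y_def)
  qed
  finally show ?thesis .
qed

text \<open>Pointwise,
  \<open>ln y \<le> y - 1\<close> with \<open>y = exp g / (dQ/dP)\<close> gives \<open>g \<le> ln (dQ/dP) + y - 1\<close>, and
  \<open>\<integral>y dQ \<le> \<integral>exp g dP \<le> 1\<close>.\<close>

lemma integral_le_KL_divergence:
  fixes P Q :: "'a measure" and g :: "'a \<Rightarrow> real"
  assumes P: "prob_space P" and Q: "prob_space Q" and sQ: "sets Q = sets P"
    and ac: "absolutely_continuous P Q"
    and KL_int: "integrable Q (entropy_density (exp 1) P Q)"
    and g[measurable]: "g \<in> borel_measurable P" and g_int: "integrable Q g"
    and exp_g: "(\<integral>\<^sup>+x. exp (g x) \<partial>P) \<le> 1"
  shows "(\<integral>x. g x \<partial>Q) \<le> KL_divergence (exp 1) P Q"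
proof -
  interpret P: prob_space P by fact
  interpret Q: prob_space Q by fact
  define r where "r x = enn2real (RN_deriv P Q x)" for x
  define y where "y x = exp (g x) / r x" for x
  have measurable_Q: "borel_measurable Q = borel_measurable P"
    by (rule measurable_cong_sets[OF sQ refl])
  have [measurable]: "y \<in> borel_measurable Q"
    unfolding measurable_Q y_def r_def by measurable
  have r_pos: "AE x in Q. 0 < r x"
  proof -
    have "AE x in P. RN_deriv P Q x \<noteq> \<infinity>"
      using P.RN_deriv_finite[OF _ ac sQ] Q.sigma_finite_measure_axioms by blast
    then have "AE x in density P (RN_deriv P Q). 0 < r x"
      by (subst AE_density) (auto simp: r_def enn2real_positive_iff less_top)
    then show ?thesis by (simp only: P.density_RN_deriv[OF ac sQ])
  qed
  have y_nn_int: "(\<integral>\<^sup>+x. ennreal (y x) \<partial>Q) \<le> 1"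
    using nn_integral_exp_div_RN_deriv_le[OF P Q sQ ac g] exp_g
    unfolding y_def r_def by order
  have y_nonneg: "AE x in Q. 0 \<le> y x"
    using r_pos by eventually_elim (simp add: y_def)
  have y_int: "integrable Q y"
    using y_nn_int y_nonneg
    by (intro integrableI_nonneg) (auto simp: top.not_eq_extremum intro: le_less_trans)
  have "(\<integral>x. y x \<partial>Q) = enn2real (\<integral>\<^sup>+x. ennreal (y x) \<partial>Q)"
    using y_nonneg by (intro integral_eq_nn_integral) auto
  also have "\<dots> \<le> 1" using y_nn_int by (simp add: enn2real_leI)
  finally have y_integral: "(\<integral>x. y x \<partial>Q) \<le> 1" .
  have "(\<integral>x. g x \<partial>Q) \<le> (\<integral>x. entropy_density (exp 1) P Q x + y x - 1 \<partial>Q)"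
  proof (rule integral_mono_AE)
    show "integrable Q (\<lambda>x. entropy_density (exp 1) P Q x + y x - 1)"
      using KL_int y_int by auto
    show "AE x in Q. g x \<le> entropy_density (exp 1) P Q x + y x - 1"
      using r_pos
    proof eventually_elim
      case (elim x)
      have "ln (y x) \<le> y x - 1" using elim by (intro ln_le_minus_one) (simp add: y_def)
      then show ?case
        using elim by (simp add: y_def ln_div entropy_density_def log_def r_def)
    qed
  qed (fact g_int)
  also have "\<dots> = KL_divergence (exp 1) P Q + (\<integral>x. y x \<partial>Q) - 1"
    using KL_int y_int by (simp add: KL_divergence_def Q.prob_space)
  also have "\<dots> \<le> KL_divergence (exp 1) P Q" using y_integral by simp
  finally show ?thesis .
qed

lemma pac_bayes_bound:
  fixes M :: "'s measure" and P :: "'f measure" and \<Phi> :: "'s \<Rightarrow> 'f \<Rightarrow> real"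
  assumes M: "prob_space M" and P: "prob_space P"
    and \<Phi>[measurable]: "case_prod \<Phi> \<in> borel_measurable (M \<Otimes>\<^sub>M P)"
    and exp_moment: "\<And>f. f \<in> space P \<Longrightarrow> (\<integral>\<^sup>+S. exp (\<Phi> S f) \<partial>M) \<le> 1"
    and \<delta>: "0 < \<delta>"
  shows "\<exists>A\<in>sets M. 1 - \<delta> \<le> measure M A \<and>
    (\<forall>S\<in>A. \<forall>Q. prob_space Q \<and> sets Q = sets P \<and> kl_le Q P \<kappa> \<and> integrable Q (\<Phi> S) \<longrightarrow>
        (\<integral>f. \<Phi> S f \<partial>Q) \<le> \<kappa> + ln (1 / \<delta>))"
proof -
  interpret M: prob_space M by fact
  interpret P: prob_space P by fact
  interpret MP: pair_sigma_finite M P ..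
  define G where "G S = (\<integral>\<^sup>+f. exp (\<Phi> S f) \<partial>P)" for S
  have G[measurable]: "G \<in> borel_measurable M"
    unfolding G_def by (rule P.borel_measurable_nn_integral) measurable
  have "(\<integral>\<^sup>+S. G S \<partial>M) = (\<integral>\<^sup>+f. (\<integral>\<^sup>+S. exp (\<Phi> S f) \<partial>M) \<partial>P)"
    unfolding G_def
    by (rule MP.Fubini'[symmetric]) (simp add: split_beta')
  also have "\<dots> \<le> (\<integral>\<^sup>+f. 1 \<partial>P)" by (intro nn_integral_mono exp_moment)
  finally have G_integral: "(\<integral>\<^sup>+S. G S \<partial>M) \<le> 1" by (simp add: P.emeasure_space_1)
  define B where "B = {S \<in> space M. 1 \<le> ennreal \<delta> * G S}"
  have B[measurable]: "B \<in> sets M" unfolding B_def by measurable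
  have "emeasure M B \<le> ennreal \<delta> * (\<integral>\<^sup>+S. G S * indicator (space M) S \<partial>M)"
    unfolding B_def by (rule nn_integral_Markov_inequality) auto
  also have "\<dots> = ennreal \<delta> * (\<integral>\<^sup>+S. G S \<partial>M)"
    by (intro arg_cong2[where f="(*)"] nn_integral_cong) auto
  also have "\<dots> \<le> ennreal \<delta>" using mult_left_mono[OF G_integral] by simp
  finally have "measure M B \<le> \<delta>" using \<delta> by (simp add: M.emeasure_eq_measure)
  then have A_measure: "1 - \<delta> \<le> measure M (space M - B)"
    using M.prob_compl[OF B] by simp
  have "(\<integral>f. \<Phi> S f \<partial>Q) \<le> \<kappa> + ln (1 / \<delta>)"
    if S: "S \<in> space M - B" and Q: "prob_space Q" and sQ: "sets Q = sets P"
      and kl: "kl_le Q P \<kappa>" and \<Phi>_int: "integrable Q (\<Phi> S)" for S Q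
  proof -
    interpret Q: prob_space Q by fact
    have [measurable]: "\<Phi> S \<in> borel_measurable P"
      using measurable_Pair2[OF \<Phi>] S by simp
    have "(\<integral>\<^sup>+f. exp (\<Phi> S f + ln \<delta>) \<partial>P) = ennreal \<delta> * G S"
      unfolding G_def using \<delta>
      by (subst nn_integral_cmult[symmetric]) (auto simp: exp_add ennreal_mult' mult.commute)
    also have "\<dots> \<le> 1" using S by (auto simp: B_def)
    finally have "(\<integral>f. \<Phi> S f + ln \<delta> \<partial>Q) \<le> KL_divergence (exp 1) P Q"
      using kl \<Phi>_int unfolding kl_le_def
      by (intro integral_le_KL_divergence[OF P Q sQ]) auto
    also have "\<dots> \<le> \<kappa>" using kl by (simp add: kl_le_def)
    finally have "(\<integral>f. \<Phi> S f + ln \<delta> \<partial>Q) \<le> \<kappa>" .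
    moreover have "(\<integral>f. \<Phi> S f + ln \<delta> \<partial>Q) = (\<integral>f. \<Phi> S f \<partial>Q) + ln \<delta>"
      using \<Phi>_int by (simp add: Q.prob_space)
    ultimately show ?thesis using \<delta> by (simp add: ln_div)
  qed
  then show ?thesis
    using A_measure by (intro bexI[of _ "space M - B"]) auto
qed

lemma (in prob_space) integrable_binary:
  fixes x :: "'a \<Rightarrow> real"
  assumes "x \<in> borel_measurable M" and "\<forall>\<omega>\<in>space M. x \<omega> \<in> {0, 1}"
  shows "integrable M x"
  by (rule integrable_const_bound[where B=1]) (use assms in \<open>auto intro!: AE_I2\<close>)

lemma (in prob_space) integral_binary_bounds:
  fixes x :: "'a \<Rightarrow> real"
  assumes "x \<in> borel_measurable M" and "\<forall>\<omega>\<in>space M. x \<omega> \<in> {0, 1}"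
  shows "0 \<le> (\<integral>\<omega>. x \<omega> \<partial>M)" and "(\<integral>\<omega>. x \<omega> \<partial>M) \<le> 1"
  using assms integrable_binary[OF assms]
  by (auto intro!: integral_nonneg_AE integral_le_const AE_I2)

lemma le_one_minus_exp_neg:
  fixes a t :: real
  assumes t: "0 \<le> t" and at: "1 + a * t \<le> a" and a: "1 \<le> a"
  shows "t \<le> 1 - exp (- (a * t))"
proof -
  have at_nonneg: "0 \<le> a * t" using t a by simp
  have "exp (- (a * t)) \<le> 1 / (1 + a * t)"
    using exp_ge_add_one_self[of "a * t"] at_nonneg by (simp add: exp_minus divide_simps)
  moreover have "t * (1 + a * t) \<le> a * t"
    using mult_left_mono[of 1 "a - a * t" t] at t by (simp add: algebra_simps)
  then have "t \<le> 1 - 1 / (1 + a * t)" using at_nonneg by (simp add: field_simps)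
  ultimately show ?thesis by linarith
qed

text \<open>For a \<open>{0,1}\<close>-valued \<open>f\<close>, \<open>exp (- a t f) = 1 - e f\<close> with \<open>e = 1 - exp (- a t) \<ge> t\<close>,
  so the integral is \<open>exp (t p) (1 - e p) \<le> exp ((t - e) p) \<le> 1\<close>.\<close>

lemma nn_integral_exp_binary_deviation_le_1:
  fixes D :: "'z measure" and f :: "'z \<Rightarrow> real"
  assumes D: "prob_space D" and f[measurable]: "f \<in> borel_measurable D"
    and f01: "\<forall>z\<in>space D. f z \<in> {0, 1}"
    and t: "0 \<le> t" and at: "1 + a * t \<le> a" and a: "1 \<le> a"
  shows "(\<integral>\<^sup>+z. exp (t * (\<integral>y. f y \<partial>D) - a * t * f z) \<partial>D) \<le> 1"
proof -
  interpret D: prob_space D by fact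
  define p where "p = (\<integral>y. f y \<partial>D)"
  define e where "e = 1 - exp (- (a * t))"
  have f_int: "integrable D f" using D.integrable_binary[OF f f01] .
  have p: "0 \<le> p" unfolding p_def using D.integral_binary_bounds[OF f f01] by simp
  have e: "t \<le> e" "e \<le> 1" unfolding e_def using le_one_minus_exp_neg[OF t at a] by auto
  have pointwise: "exp (t * p - a * t * f z) = exp (t * p) * (1 - e * f z)" if "z \<in> space D" for z
    using f01 that by (auto simp: e_def exp_diff exp_minus divide_inverse)
  have bound: "exp (t * p) * (1 - e * p) \<le> 1"
  proof -
    have "exp (t * p) * (1 - e * p) \<le> exp (t * p) * exp (- (e * p))"
      using exp_ge_add_one_self[of "- (e * p)"] by (intro mult_left_mono) auto
    also have "\<dots> = exp (p * (t - e))" by (simp add: exp_minus exp_diff field_simps)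
    also have "\<dots> \<le> 1" using p e by (simp add: mult_nonneg_nonpos)
    finally show ?thesis .
  qed
  have "(\<integral>\<^sup>+z. exp (t * p - a * t * f z) \<partial>D) = (\<integral>\<^sup>+z. exp (t * p) * (1 - e * f z) \<partial>D)"
    using pointwise by (intro nn_integral_cong) simp
  also have "\<dots> = exp (t * p) * (1 - e * p)"
    using f_int f01 e by (subst nn_integral_eq_integral) (auto intro!: AE_I2 simp: p_def D.prob_space)
  also have "\<dots> \<le> 1" using bound by simp
  finally show ?thesis unfolding p_def by simp
qed

lemma nn_integral_PiM_exp_empirical_deviation_le_1:
  fixes D :: "'z measure" and f :: "'z \<Rightarrow> real" and m :: nat
  assumes D: "prob_space D" and f[measurable]: "f \<in> borel_measurable D"
    and f01: "\<forall>z\<in>space D. f z \<in> {0, 1}"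
    and t: "0 \<le> t" and at: "1 + a * t \<le> a" and a: "1 \<le> a"
  shows "(\<integral>\<^sup>+S. exp (t * (real m * (\<integral>z. f z \<partial>D) - a * (\<Sum>i<m. f (S i)))) \<partial>PiM {..<m} (\<lambda>_. D))
    \<le> 1"
proof -
  interpret D: prob_space D by fact
  interpret product_sigma_finite "\<lambda>_::nat. D"
    by (simp add: product_sigma_finite_def D.sigma_finite_measure_axioms)
  define F where "F z = ennreal (exp (t * (\<integral>y. f y \<partial>D) - a * t * f z))" for z
  have "ennreal (exp (t * (real m * (\<integral>z. f z \<partial>D) - a * (\<Sum>i<m. f (S i))))) = (\<Prod>i<m. F (S i))"
    for S
    by (simp add: F_def prod_ennreal exp_sum[symmetric] sum_subtractf sum_distrib_left algebra_simps)
  then have "(\<integral>\<^sup>+S. exp (t * (real m * (\<integral>z. f z \<partial>D) - a * (\<Sum>i<m. f (S i)))) \<partial>PiM {..<m} (\<lambda>_. D))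
      = (\<integral>\<^sup>+S. (\<Prod>i<m. F (S i)) \<partial>PiM {..<m} (\<lambda>_. D))"
    by simp
  also have "\<dots> = (\<Prod>i<m. integral\<^sup>N D F)"
    by (rule product_nn_integral_prod) (auto simp: F_def)
  also have "\<dots> \<le> 1"
    using nn_integral_exp_binary_deviation_le_1[OF D f f01 t at a]
    unfolding F_def by (intro prod_le_1) auto
  finally show ?thesis .
qed

lemma integral_binary_shifted_square_ge:
  fixes Q :: "'a measure" and x :: "'a \<Rightarrow> real"
  assumes Q: "prob_space Q" and x[measurable]: "x \<in> borel_measurable Q"
    and x01: "\<forall>f\<in>space Q. x f \<in> {0, 1}" and h: "\<bar>h\<bar> \<le> 1"
  shows "h^2 * (\<integral>f. x f \<partial>Q) \<le> (\<integral>f. (x f - (1 + h) * (\<integral>g. x g \<partial>Q))^2 \<partial>Q)"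
proof -
  interpret Q: prob_space Q by fact
  define l where "l = (\<integral>f. x f \<partial>Q)"
  have x_int: "integrable Q x" using Q.integrable_binary[OF x x01] .
  have "0 \<le> l" "l \<le> 1" unfolding l_def using Q.integral_binary_bounds[OF x x01] by auto
  moreover have "h^2 \<le> 1" using h by (simp add: abs_square_le_1)
  ultimately have "0 \<le> (1 - h^2) * (l * (1 - l))" by simp
  have "(x f - (1 + h) * l)^2 = (1 - 2 * (1 + h) * l) * x f + (1 + h)^2 * l^2"
    if "f \<in> space Q" for f
    using x01 that by (auto simp: power2_eq_square algebra_simps)
  then have "(\<integral>f. (x f - (1 + h) * l)^2 \<partial>Q) = (\<integral>f. (1 - 2 * (1 + h) * l) * x f + (1 + h)^2 * l^2 \<partial>Q)"
    by (intro Bochner_Integration.integral_cong) auto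
  also have "\<dots> = h^2 * l + (1 - h^2) * (l * (1 - l))"
    using x_int by (simp add: l_def Q.prob_space power2_eq_square algebra_simps)
  finally show ?thesis
    using \<open>0 \<le> (1 - h^2) * (l * (1 - l))\<close> unfolding l_def by linarith
qed

lemma measurable_eval_PiM:
  assumes joint[measurable]: "(\<lambda>(f, z). f z) \<in> borel_measurable (P \<Otimes>\<^sub>M D)" and i: "i \<in> I"
  shows "(\<lambda>(S, f). f (S i)) \<in> borel_measurable (PiM I (\<lambda>_. D) \<Otimes>\<^sub>M P)"
proof -
  have "(\<lambda>(S, f). (f, S i)) \<in> measurable (PiM I (\<lambda>_. D) \<Otimes>\<^sub>M P) (P \<Otimes>\<^sub>M D)"
    using i by measurable
  from measurable_compose[OF this joint] show ?thesis by (simp add: split_beta')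
qed

locale binary_class =
  fixes D :: "'z measure" and P :: "('z \<Rightarrow> real) measure"
  assumes prob_space_D: "prob_space D" and prob_space_P: "prob_space P"
    and binary: "\<And>f. f \<in> space P \<Longrightarrow> f \<in> borel_measurable D \<and> (\<forall>z\<in>space D. f z \<in> {0, 1})"
    and eval_measurable[measurable]: "(\<lambda>(f, z). f z) \<in> borel_measurable (P \<Otimes>\<^sub>M D)"
begin

sublocale D: prob_space D by (fact prob_space_D)
sublocale P: prob_space P by (fact prob_space_P)

lemma eval_borel_measurable:
  assumes "sets Q = sets P" and "z \<in> space D"
  shows "(\<lambda>f. f z) \<in> borel_measurable Q"
  using measurable_compose[OF measurable_Pair2'[OF assms(2)] eval_measurable]
  by (simp add: measurable_cong_sets[OF assms(1) refl])

lemma expectation_borel_measurable: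
  assumes "sets Q = sets P"
  shows "(\<lambda>f. \<integral>z. f z \<partial>D) \<in> borel_measurable Q"
  using D.borel_measurable_lebesgue_integral[of "\<lambda>f z. f z"]
  by (simp add: measurable_cong_sets[OF assms refl])

lemma integrable_eval:
  assumes "prob_space Q" and "sets Q = sets P" and "z \<in> space D"
  shows "integrable Q (\<lambda>f. f z)"
proof -
  interpret Q: prob_space Q by fact
  show ?thesis
    using binary assms(3) eval_borel_measurable[OF assms(2,3)] sets_eq_imp_space_eq[OF assms(2)]
    by (intro Q.integrable_binary) auto
qed

lemma integrable_expectation:
  assumes "prob_space Q" and "sets Q = sets P"
  shows "integrable Q (\<lambda>f. \<integral>z. f z \<partial>D)"
proof -
  interpret Q: prob_space Q by fact
  have "\<bar>\<integral>z. f z \<partial>D\<bar> \<le> 1" if "f \<in> space P" for f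
    using binary[OF that] D.integral_binary_bounds[of f] by auto
  then show ?thesis
    using expectation_borel_measurable[OF assms(2)] sets_eq_imp_space_eq[OF assms(2)]
    by (intro Q.integrable_const_bound[where B=1]) (auto intro!: AE_I2)
qed

definition deviation :: "real \<Rightarrow> nat \<Rightarrow> (nat \<Rightarrow> 'z) \<Rightarrow> ('z \<Rightarrow> real) \<Rightarrow> real" where
  "deviation a m S f = real m * (\<integral>z. f z \<partial>D) - a * (\<Sum>i<m. f (S i))"

lemma sample_in_space: "S \<in> space (PiM {..<m} (\<lambda>_. D)) \<Longrightarrow> i < m \<Longrightarrow> S i \<in> space D"
  by (auto simp: space_PiM)

lemma integral_deviation:
  assumes "prob_space Q" and "sets Q = sets P" and "S \<in> space (PiM {..<m} (\<lambda>_. D))"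
  shows "integrable Q (deviation a m S)"
    and "(\<integral>f. deviation a m S f \<partial>Q)
      = real m * (\<integral>f. (\<integral>z. f z \<partial>D) \<partial>Q) - a * (\<Sum>i<m. \<integral>f. f (S i) \<partial>Q)"
proof -
  have E: "integrable Q (\<lambda>f. \<integral>z. f z \<partial>D)" by (rule integrable_expectation[OF assms(1,2)])
  have eval: "integrable Q (\<lambda>f. f (S i))" if "i < m" for i
    using integrable_eval[OF assms(1,2) sample_in_space[OF assms(3) that]] .
  then have sum: "integrable Q (\<lambda>f. \<Sum>i<m. f (S i))" by auto
  show "integrable Q (deviation a m S)"
    unfolding deviation_def[abs_def] using E sum by auto
  show "(\<integral>f. deviation a m S f \<partial>Q)
      = real m * (\<integral>f. (\<integral>z. f z \<partial>D) \<partial>Q) - a * (\<Sum>i<m. \<integral>f. f (S i) \<partial>Q)"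
    unfolding deviation_def using E sum eval by (simp add: Bochner_Integration.integral_sum)
qed

lemma objective_le_integral_deviation:
  assumes Q: "prob_space Q" and sQ: "sets Q = sets P" and S: "S \<in> space (PiM {..<m} (\<lambda>_. D))"
    and m: "0 < m" and c: "0 \<le> c" and h: "\<bar>h\<bar> \<le> 1"
  shows "(\<integral>f. (\<integral>z. f z \<partial>D) \<partial>Q) - (1 / real m) * (\<Sum>i<m. \<integral>f. f (S i) \<partial>Q)
      - (c / real m) * (\<Sum>i<m. \<integral>f. (f (S i) - (1 + h) * (\<integral>g. g (S i) \<partial>Q))^2 \<partial>Q)
    \<le> (\<integral>f. deviation (1 + h^2 * c) m S f \<partial>Q) / real m"
proof -
  define l where "l i = (\<integral>f. f (S i) \<partial>Q)" for i
  have "h^2 * l i \<le> (\<integral>f. (f (S i) - (1 + h) * (\<integral>g. g (S i) \<partial>Q))^2 \<partial>Q)" if "i < m" for i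
    unfolding l_def using binary sample_in_space[OF S that] sets_eq_imp_space_eq[OF sQ] h
    by (intro integral_binary_shifted_square_ge[OF Q eval_borel_measurable[OF sQ]]) auto
  then have "h^2 * (\<Sum>i<m. l i) \<le> (\<Sum>i<m. \<integral>f. (f (S i) - (1 + h) * (\<integral>g. g (S i) \<partial>Q))^2 \<partial>Q)"
    unfolding sum_distrib_left by (intro sum_mono) auto
  then show ?thesis
    using m c unfolding integral_deviation(2)[OF Q sQ S] l_def[symmetric]
    by (simp add: field_simps mult_left_mono)
qed

lemma deviation_measurable:
  "(\<lambda>(S, f). t * deviation a m S f) \<in> borel_measurable (PiM {..<m} (\<lambda>_. D) \<Otimes>\<^sub>M P)"
proof -
  have [measurable]: "(\<lambda>x. snd x (fst x i)) \<in> borel_measurable (PiM {..<m} (\<lambda>_. D) \<Otimes>\<^sub>M P)"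
    if "i < m" for i
    using measurable_eval_PiM[OF eval_measurable, of i "{..<m}"] that by (simp add: split_beta')
  have [measurable]: "(\<lambda>f. \<integral>z. f z \<partial>D) \<in> borel_measurable P"
    by (rule expectation_borel_measurable[OF refl])
  show ?thesis unfolding deviation_def by (simp add: split_beta') measurable
qed

theorem pac_bayes_variance_bound:
  assumes c: "0 \<le> c" and h: "\<bar>h\<bar> \<le> 1" and t: "0 < t" and t_le: "(1 + h^2 * c) * t \<le> h^2 * c"
    and m: "0 < m" and \<delta>: "0 < \<delta>"
  shows "\<exists>A\<in>sets (PiM {..<m} (\<lambda>_. D)). 1 - \<delta> \<le> measure (PiM {..<m} (\<lambda>_. D)) A \<and>
    (\<forall>S\<in>A. \<forall>Q. prob_space Q \<and> sets Q = sets P \<and> kl_le Q P \<kappa> \<longrightarrow>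
       (\<integral>f. (\<integral>z. f z \<partial>D) \<partial>Q) - (1 / real m) * (\<Sum>i<m. \<integral>f. f (S i) \<partial>Q)
       - (c / real m) * (\<Sum>i<m. \<integral>f. (f (S i) - (1 + h) * (\<integral>g. g (S i) \<partial>Q))^2 \<partial>Q)
       \<le> (\<kappa> + ln (1 / \<delta>)) / (real m * t))"
proof -
  let ?M = "PiM {..<m} (\<lambda>_. D)"
  let ?a = "1 + h^2 * c"
  have "(\<integral>\<^sup>+S. exp (t * deviation ?a m S f) \<partial>?M) \<le> 1" if "f \<in> space P" for f
    unfolding deviation_def using binary[OF that] t t_le c
    by (intro nn_integral_PiM_exp_empirical_deviation_le_1[OF prob_space_D])
      (auto simp: algebra_simps)
  from pac_bayes_bound[where \<kappa>=\<kappa>, OF prob_space_PiM[OF prob_space_D] prob_space_P deviation_measurable this \<delta>]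
  obtain A where A: "A \<in> sets ?M" "1 - \<delta> \<le> measure ?M A"
    and A_bound: "\<And>S Q. S \<in> A \<Longrightarrow> prob_space Q \<Longrightarrow> sets Q = sets P \<Longrightarrow> kl_le Q P \<kappa> \<Longrightarrow>
      integrable Q (deviation ?a m S) \<Longrightarrow>
      t * (\<integral>f. deviation ?a m S f \<partial>Q) \<le> \<kappa> + ln (1 / \<delta>)"
    by (auto simp: split_beta')
  show ?thesis
  proof (intro bexI[OF _ A(1)] conjI A(2) ballI allI impI)
    fix S Q assume S: "S \<in> A" and "prob_space Q \<and> sets Q = sets P \<and> kl_le Q P \<kappa>"
    then have Q: "prob_space Q" "sets Q = sets P" "kl_le Q P \<kappa>" by auto
    have S_space: "S \<in> space ?M" using sets.sets_into_space[OF A(1)] S by auto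
    have "t * (\<integral>f. deviation ?a m S f \<partial>Q) \<le> \<kappa> + ln (1 / \<delta>)"
      using A_bound[OF S Q integral_deviation(1)[OF Q(1,2) S_space]] .
    then have "(\<integral>f. deviation ?a m S f \<partial>Q) / real m \<le> (\<kappa> + ln (1 / \<delta>)) / (real m * t)"
      using t m by (simp add: field_simps)
    with objective_le_integral_deviation[OF Q(1,2) S_space m c h]
    show "(\<integral>f. (\<integral>z. f z \<partial>D) \<partial>Q) - (1 / real m) * (\<Sum>i<m. \<integral>f. f (S i) \<partial>Q)
       - (c / real m) * (\<Sum>i<m. \<integral>f. (f (S i) - (1 + h) * (\<integral>g. g (S i) \<partial>Q))^2 \<partial>Q)
       \<le> (\<kappa> + ln (1 / \<delta>)) / (real m * t)" by linarith
  qed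
qed

end

lemma one_plus_mult_le_of_le_divide:
  fixes t u c2 :: real
  assumes t: "0 \<le> t" and c2: "0 < c2" "c2 < u"
    and t_le: "t \<le> (u - c2) / (2 * (1 + u) * (1 + c2))"
  shows "(1 + u) * t \<le> u"
proof -
  have "(1 + u) * t \<le> (2 * (1 + u) * (1 + c2)) * t"
    using t c2 by (intro mult_right_mono) (auto simp: algebra_simps)
  also have "\<dots> \<le> u - c2" using t_le c2 by (simp add: pos_le_divide_eq mult.commute)
  finally show ?thesis using c2 by linarith
qed

theorem mainTheorem3:
  fixes D :: "'z measure" and P :: "('z \<Rightarrow> real) measure"
    and c h c2 \<kappa> \<delta> lam :: real and m :: nat
  assumes D: "prob_space D" and P: "prob_space P"
    and F01: "\<forall>f\<in>space P. f \<in> borel_measurable D \<and> (\<forall>z\<in>space D. f z \<in> {0, 1})"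
    and joint: "(\<lambda>(f, z). f z) \<in> borel_measurable (P \<Otimes>\<^sub>M D)"
    and c: "c > 0" and h: "0 < h" "h \<le> 1"
    and c2: "0 < c2" "c2 < h^2 * c"
    and \<kappa>: "\<kappa> > 0" and \<delta>: "0 < \<delta>" "\<delta> < 1" and m: "m \<ge> 1" and lam: "lam > 0"
    and lam_m: "lam / real m \<le> min ((h^2 * c - c2) / (2 * (1 + h^2 * c) * (1 + c2)))
                  (4 * c2 * h^2 / ((1 + c2) * (1 + c2 * h^2)) * (\<kappa> + ln (4 / \<delta>)))"
  shows "\<exists>A \<in> sets (PiM {..<m} (\<lambda>_. D)).
           measure (PiM {..<m} (\<lambda>_. D)) A \<ge> 1 - \<delta> \<and>
           (\<forall>S\<in>A. \<forall>Q. prob_space Q \<and> sets Q = sets P \<and> kl_le Q P \<kappa> \<longrightarrow>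
              (\<integral>f. (\<integral>z. f z \<partial>D) \<partial>Q)
              - (1 / real m) * (\<Sum>i<m. \<integral>f. f (S i) \<partial>Q)
              - (c / real m) * (\<Sum>i<m. \<integral>f. (f (S i) - (1 + h) * (\<integral>g. g (S i) \<partial>Q))^2 \<partial>Q)
              \<le> 4 / lam * (\<kappa> + ln (4 / \<delta>)))"
proof -
  interpret binary_class D P
    using F01 by (intro binary_class.intro[OF D P _ joint]) blast
  define t where "t = lam / real m"
  have m_pos: "0 < m" and t: "0 < t" using m lam by (auto simp: t_def)
  have step: "(1 + h^2 * c) * t \<le> h^2 * c"
    using lam_m c2 t by (intro one_plus_mult_le_of_le_divide) (auto simp: t_def)
  have bound_le: "(\<kappa> + ln (1 / \<delta>)) / (real m * t) \<le> 4 / lam * (\<kappa> + ln (4 / \<delta>))"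
  proof -
    have "ln (1 / \<delta>) \<le> ln (4 / \<delta>)" and "0 \<le> ln (4 / \<delta>)" using \<delta> by (auto simp: divide_right_mono)
    then have "\<kappa> + ln (1 / \<delta>) \<le> 4 * (\<kappa> + ln (4 / \<delta>))" using \<kappa> by (smt (verit))
    then show ?thesis using lam m_pos by (simp add: t_def divide_right_mono)
  qed
  have "0 \<le> c" "\<bar>h\<bar> \<le> 1" using c h by auto
  from pac_bayes_variance_bound[OF this t step m_pos \<delta>(1), of \<kappa>] bound_le
  show ?thesis by (fastforce intro: order_trans)
qed

end
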